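(* Let $(S,M)$ be a surface with marked points and empty boundary, and let $(S,M')$ be obtained by adding one more puncture, $M'=M\cup\{p\}$. (a) If $(S,M)$ has an ideal triangulation satisfying (T3), then so does $(S,M')$. (b) If $(S,M)$ has an ideal triangulation satisfying (T3$\tfrac12$), then so does $(S,M')$. (c) If $(S,M)$ has an ideal triangulation satisfying (T4), then so does $(S,M')$.
   Context: $(S,M)$: $S$ compact, connected, oriented surface without boundary, $M$ a finite non-empty set of punctures. Arcs incident to a puncture are counted with multiplicity (an arc with both endpoints at the puncture counts twice). (T3): at each puncture at least three arcs of $T$ are incident. (T3$\tfrac12$): $T$ has (T3) and every arc of $T$ has an endpoint with at least four incident arcs. (T4): at each puncture at least four arcs of $T$ are incident. *)

theory Defs
  imports "HOL-Combinatorics.Permutations"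
begin

text \<open>Combinatorial model of an ideal triangulation of a closed oriented punctured
surface (S,M): a triangulated combinatorial map.  Darts D (half-edges), s = rotation
of darts around each vertex (puncture), a = fixed-point-free involution pairing the
two halves of each arc; faces are the orbits of s o a, all of size 3 (triangles,
self-folded ones allowed).  Punctures = s-orbits; the number of arcs incident to a
puncture counted with multiplicity is the size of its s-orbit.\<close>

definition dorbit :: "(nat \<Rightarrow> nat) \<Rightarrow> nat \<Rightarrow> nat set" where
  "dorbit f x = {(f ^^ k) x | k. True}"

definition tri_map :: "nat set \<Rightarrow> (nat \<Rightarrow> nat) \<Rightarrow> (nat \<Rightarrow> nat) \<Rightarrow> bool" where
  "tri_map D s a \<longleftrightarrow>
     finite D \<and> D \<noteq> {} \<and> s permutes D \<and> a permutes D \<and>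
     (\<forall>x\<in>D. a x \<noteq> x \<and> a (a x) = x) \<and>
     (\<forall>x\<in>D. ((s \<circ> a) ^^ 3) x = x \<and> (s \<circ> a) x \<noteq> x) \<and>
     (\<forall>x\<in>D. \<forall>y\<in>D. (x, y) \<in> ({(z, s z) | z. z \<in> D} \<union> {(z, a z) | z. z \<in> D})\<^sup>*)"

definition punctures :: "nat set \<Rightarrow> (nat \<Rightarrow> nat) \<Rightarrow> nat set set" where
  "punctures D s = dorbit s ` D"

text \<open>Euler characteristic V - E + F; E = |D|/2 arcs, F = |D|/3 triangles.\<close>
definition euler_char :: "nat set \<Rightarrow> (nat \<Rightarrow> nat) \<Rightarrow> int" where
  "euler_char D s = int (card (punctures D s)) - int (card D div 2) + int (card D div 3)"

definition is_triangulation_of :: "nat \<Rightarrow> nat \<Rightarrow> nat set \<Rightarrow> (nat \<Rightarrow> nat) \<Rightarrow> (nat \<Rightarrow> nat) \<Rightarrow> bool" where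
  "is_triangulation_of g n D s a \<longleftrightarrow>
     tri_map D s a \<and> card (punctures D s) = n \<and> euler_char D s = 2 - 2 * int g"

definition valency :: "(nat \<Rightarrow> nat) \<Rightarrow> nat \<Rightarrow> nat" where
  "valency s x = card (dorbit s x)"

definition T3 :: "nat set \<Rightarrow> (nat \<Rightarrow> nat) \<Rightarrow> (nat \<Rightarrow> nat) \<Rightarrow> bool" where
  "T3 D s a \<longleftrightarrow> (\<forall>x\<in>D. valency s x \<ge> 3)"

definition T3half :: "nat set \<Rightarrow> (nat \<Rightarrow> nat) \<Rightarrow> (nat \<Rightarrow> nat) \<Rightarrow> bool" where
  "T3half D s a \<longleftrightarrow> T3 D s a \<and> (\<forall>x\<in>D. valency s x \<ge> 4 \<or> valency s (a x) \<ge> 4)"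

definition T4 :: "nat set \<Rightarrow> (nat \<Rightarrow> nat) \<Rightarrow> (nat \<Rightarrow> nat) \<Rightarrow> bool" where
  "T4 D s a \<longleftrightarrow> (\<forall>x\<in>D. valency s x \<ge> 4)"

definition has_triangulation ::
  "nat \<Rightarrow> nat \<Rightarrow> (nat set \<Rightarrow> (nat \<Rightarrow> nat) \<Rightarrow> (nat \<Rightarrow> nat) \<Rightarrow> bool) \<Rightarrow> bool" where
  "has_triangulation g n P \<longleftrightarrow> (\<exists>D s a. is_triangulation_of g n D s a \<and> P D s a)"

end

theory Submission
  imports Defs
begin

text \<open>Pick any arc \<open>x0\<close>--\<open>y0\<close> and place the new puncture at its midpoint, joining it to
  the corners opposite the arc in the two adjacent triangles. This replaces two triangles by
  four and adds three arcs and one puncture, so the Euler characteristic and hence the genus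
  are unchanged. The new puncture has valency 4, the two opposite corners gain one, and all
  other valencies stay the same; so (T3) and (T4) survive. For (T3\<onehalf>), every old arc either
  survives unchanged or is split into two arcs ending at the new puncture.\<close>

section \<open>Orbits\<close>

lemma self_in_dorbit: "x \<in> dorbit f x"
  unfolding dorbit_def by (auto intro: exI[of _ 0])

lemma dorbit_closed: "u \<in> dorbit f x \<Longrightarrow> f u \<in> dorbit f x"
  unfolding dorbit_def by (auto intro: exI[of _ "Suc _"])

lemma dorbit_least:
  assumes "x \<in> S" "\<And>u. u \<in> S \<Longrightarrow> f u \<in> S"
  shows "dorbit f x \<subseteq> S"
proof
  fix y assume "y \<in> dorbit f x"
  then obtain k where "y = (f ^^ k) x" unfolding dorbit_def by auto
  moreover have "(f ^^ k) x \<in> S" by (induction k) (auto simp: assms)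
  ultimately show "y \<in> S" by simp
qed

lemma dorbit_subset_dorbit: "y \<in> dorbit f x \<Longrightarrow> dorbit f y \<subseteq> dorbit f x"
  by (rule dorbit_least) (auto intro: dorbit_closed)

lemma dorbit_subset_permutes: "f permutes A \<Longrightarrow> x \<in> A \<Longrightarrow> dorbit f x \<subseteq> A"
  by (rule dorbit_least) (auto simp: permutes_in_image)

lemma finite_dorbit: "f permutes A \<Longrightarrow> finite A \<Longrightarrow> x \<in> A \<Longrightarrow> finite (dorbit f x)"
  by (rule finite_subset[OF dorbit_subset_permutes])

lemma dorbit_cong:
  assumes "\<And>u. u \<in> dorbit g x \<Longrightarrow> h u = g u"
  shows "dorbit h x = dorbit g x"
proof -
  have "(h ^^ k) x = (g ^^ k) x" for k
  proof (induction k)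
    case (Suc k)
    have "(g ^^ k) x \<in> dorbit g x" unfolding dorbit_def by auto
    then show ?case using Suc assms by simp
  qed simp
  then show ?thesis unfolding dorbit_def by auto
qed

lemma in_dorbit_apply:
  assumes "f permutes A" "finite A"
  shows "x \<in> dorbit f (f x)"
proof -
  obtain n where "n > 0" "(f ^^ n) x = x"
    using permutation_self assms permutation_permutes by metis
  then have "x = (f ^^ (n - 1)) (f x)" by (metis Suc_diff_1 funpow_Suc_right o_apply)
  then show ?thesis unfolding dorbit_def by blast
qed

lemma card_dorbit_le_2:
  assumes "f (f x) = x"
  shows "card (dorbit f x) \<le> 2"
proof -
  have "dorbit f x \<subseteq> {x, f x}" by (rule dorbit_least) (auto simp: assms)
  then have "card (dorbit f x) \<le> card {x, f x}" by (intro card_mono) auto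
  also have "\<dots> \<le> 2" by (simp add: card_insert_le_m1)
  finally show ?thesis .
qed

lemma involution_permutes:
  assumes "\<And>x. x \<in> S \<Longrightarrow> f x \<in> S \<and> f (f x) = x" "\<And>x. x \<notin> S \<Longrightarrow> f x = x"
  shows "f permutes S"
proof (rule bij_imp_permutes)
  show "bij_betw f S S" by (rule bij_betw_byWitness[where f' = f]) (use assms in auto)
qed (use assms in auto)

section \<open>Inserting a point into a cycle\<close>

locale cycle_insert =
  fixes f g :: "nat \<Rightarrow> nat" and A :: "nat set" and c r :: nat
  assumes f_permutes: "f permutes A" and c_in: "c \<in> A" and r_notin: "r \<notin> A"
    and g_def: "g = f(c := r, r := f c)"
begin

lemma f_r: "f r = r"
  using f_permutes r_notin by (simp add: permutes_not_in)

lemma r_neq_c: "r \<noteq> c"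
  using c_in r_notin by auto

lemma g_permutes: "g permutes insert r A"
proof -
  have "g = f \<circ> Transposition.transpose c r"
    by (rule ext) (auto simp: g_def f_r Transposition.transpose_def)
  moreover have "Transposition.transpose c r permutes insert r A"
    using c_in by (intro permutes_swap_id) auto
  moreover have "f permutes insert r A" using f_permutes by (rule permutes_subset) auto
  ultimately show ?thesis by (simp add: permutes_compose)
qed

lemma dorbit_subset: "dorbit f x \<subseteq> dorbit g x"
proof (rule dorbit_least[OF self_in_dorbit])
  fix u assume u: "u \<in> dorbit g x"
  show "f u \<in> dorbit g x"
  proof (cases "u = c")
    case True
    then have "f u = g (g u)" using g_def r_neq_c by simp
    then show ?thesis using u dorbit_closed by metis
  next
    case False
    then show ?thesis using u dorbit_closed[OF u] by (cases "u = r") (auto simp: g_def f_r)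
  qed
qed

lemma dorbit_collapse:
  assumes "y \<in> dorbit g x"
  shows "(if y = r then c else y) \<in> dorbit f (if x = r then c else x)"
proof -
  let ?p = "\<lambda>y. if y = r then c else y"
  have "dorbit g x \<subseteq> {y. ?p y \<in> dorbit f (?p x)}"
  proof (rule dorbit_least)
    fix u assume u: "u \<in> {y. ?p y \<in> dorbit f (?p x)}"
    have "f c \<in> A" using f_permutes c_in by (simp add: permutes_in_image)
    moreover have "u \<noteq> r \<Longrightarrow> f u \<noteq> r"
      using f_permutes f_r by (metis permutes_inverses(2))
    ultimately show "g u \<in> {y. ?p y \<in> dorbit f (?p x)}"
      using u r_notin r_neq_c dorbit_closed[of "?p u" f "?p x"]
      by (cases "u = c"; cases "u = r") (auto simp: g_def)
  qed (simp add: self_in_dorbit)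
  then show ?thesis using assms by blast
qed

lemma dorbit_old:
  assumes "x \<in> A"
  shows "dorbit g x = dorbit f x \<union> (if c \<in> dorbit f x then {r} else {})"
proof
  have "x \<noteq> r" using assms r_notin by auto
  then show "dorbit g x \<subseteq> dorbit f x \<union> (if c \<in> dorbit f x then {r} else {})"
    using dorbit_collapse[of _ x] by (fastforce split: if_splits)
  have "c \<in> dorbit f x \<Longrightarrow> r \<in> dorbit g x"
    using dorbit_subset dorbit_closed[of c g x] r_neq_c by (auto simp: g_def)
  then show "dorbit f x \<union> (if c \<in> dorbit f x then {r} else {}) \<subseteq> dorbit g x"
    using dorbit_subset by auto
qed

lemma dorbit_new_superset: "insert r (dorbit f (f c)) \<subseteq> dorbit g r"
proof -
  have "f c \<in> dorbit g r"
    using dorbit_closed[OF self_in_dorbit[of r g]] r_neq_c by (simp add: g_def)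
  then have "dorbit g (f c) \<subseteq> dorbit g r" by (rule dorbit_subset_dorbit)
  then show ?thesis using dorbit_subset[of "f c"] self_in_dorbit[of r g] by auto
qed

lemma dorbit_new:
  assumes "finite A"
  shows "dorbit g r = insert r (dorbit f (f c))"
proof
  have "dorbit f c \<subseteq> dorbit f (f c)"
    using dorbit_subset_dorbit[OF in_dorbit_apply[OF f_permutes assms]] .
  moreover have "y \<in> dorbit g r \<Longrightarrow> y = r \<or> y \<in> dorbit f c" for y
    using dorbit_collapse[of y r] by (cases "y = r") auto
  ultimately show "dorbit g r \<subseteq> insert r (dorbit f (f c))" by blast
qed (rule dorbit_new_superset)

lemma card_dorbit_new:
  assumes "finite A"
  shows "card (dorbit g r) = Suc (card (dorbit f (f c)))"
proof -
  have "dorbit f (f c) \<subseteq> A"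
    using dorbit_subset_permutes[OF f_permutes] f_permutes c_in by (simp add: permutes_in_image)
  then show ?thesis
    using dorbit_new[OF assms] r_notin finite_subset[OF _ assms] by (auto simp: card_insert_if)
qed

lemma card_dorbit_image:
  assumes "finite A"
  shows "card (dorbit g ` insert r A) = card (dorbit f ` A)"
proof -
  let ?i = "\<lambda>X. if c \<in> X then insert r X else X"
  have "dorbit g r = ?i (dorbit f (f c))"
    using dorbit_new[OF assms] in_dorbit_apply[OF f_permutes assms, of c] by simp
  moreover have "f c \<in> A" using f_permutes c_in by (simp add: permutes_in_image)
  moreover have "\<And>x. x \<in> A \<Longrightarrow> dorbit g x = ?i (dorbit f x)"
    using dorbit_old by auto
  ultimately have "dorbit g ` insert r A = ?i ` (dorbit f ` A)"
    by (auto simp: image_iff)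
  moreover have "inj_on ?i (dorbit f ` A)"
  proof (rule inj_onI)
    fix X1 X2 assume "X1 \<in> dorbit f ` A" "X2 \<in> dorbit f ` A" "?i X1 = ?i X2"
    moreover have "X1 \<subseteq> A" "X2 \<subseteq> A" using calculation dorbit_subset_permutes[OF f_permutes] by auto
    ultimately have "?i X1 \<inter> A = ?i X2 \<inter> A" by simp
    then show "X1 = X2" using \<open>X1 \<subseteq> A\<close> \<open>X2 \<subseteq> A\<close> r_notin by (auto split: if_splits)
  qed
  ultimately show ?thesis using card_image by metis
qed

end

section \<open>A new puncture on an arc\<close>

locale puncture_on_arc =
  fixes D :: "nat set" and s a :: "nat \<Rightarrow> nat" and x0 :: nat
  assumes tri_map: "tri_map D s a" and T3: "T3 D s a" and x0_in: "x0 \<in> D"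
begin

lemma finite_D: "finite D"
  and s_permutes: "s permutes D"
  and a_permutes: "a permutes D"
  and a_neq: "x \<in> D \<Longrightarrow> a x \<noteq> x"
  and a_a: "x \<in> D \<Longrightarrow> a (a x) = x"
  and face_3: "x \<in> D \<Longrightarrow> s (a (s (a (s (a x))))) = x"
  and face_neq: "x \<in> D \<Longrightarrow> s (a x) \<noteq> x"
  and connected: "x \<in> D \<Longrightarrow> y \<in> D \<Longrightarrow>
      (x, y) \<in> ({(z, s z) | z. z \<in> D} \<union> {(z, a z) | z. z \<in> D})\<^sup>*"
  using tri_map unfolding tri_map_def by (auto simp: numeral_3_eq_3)

lemma s_in: "x \<in> D \<Longrightarrow> s x \<in> D" and a_in: "x \<in> D \<Longrightarrow> a x \<in> D"
  using s_permutes a_permutes by (simp_all add: permutes_in_image)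

lemma s_eq_iff: "s x = s y \<longleftrightarrow> x = y" and a_eq_iff: "a x = a y \<longleftrightarrow> x = y"
  using permutes_inj[OF s_permutes] permutes_inj[OF a_permutes] by (simp_all add: inj_eq)

lemma s_s_neq: "x \<in> D \<Longrightarrow> s (s x) \<noteq> x"
  using T3 card_dorbit_le_2[of s x] unfolding T3_def valency_def by force

lemma s_neq: "x \<in> D \<Longrightarrow> s x \<noteq> x"
  using s_s_neq by metis

text \<open>The two triangles adjacent to the arc \<open>x0\<close>--\<open>y0\<close> are the \<open>s \<circ> a\<close>-orbits
  \<open>(x0, u1, z1)\<close> and \<open>(y0, u2, z2)\<close>; \<open>c1 = a u1\<close> and \<open>c2 = a u2\<close> are the darts at the
  corners opposite the arc, immediately before \<open>z1\<close> and \<open>z2\<close> in their rotation.\<close>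

definition "y0 = a x0"
definition "u1 = s y0"
definition "c1 = a u1"
definition "z1 = s c1"
definition "u2 = s x0"
definition "c2 = a u2"
definition "z2 = s c2"

lemma triangle_darts_in:
  "y0 \<in> D" "u1 \<in> D" "c1 \<in> D" "z1 \<in> D" "u2 \<in> D" "c2 \<in> D" "z2 \<in> D" "a z1 \<in> D" "a z2 \<in> D"
  using x0_in s_in a_in by (auto simp: y0_def u1_def c1_def z1_def u2_def c2_def z2_def)

lemma a_y0: "a y0 = x0"
  using a_a x0_in by (simp add: y0_def)

lemma s_a_z1: "s (a z1) = x0"
  using face_3[OF x0_in] by (simp add: y0_def u1_def c1_def z1_def)

lemma s_a_z2: "s (a z2) = y0"
  using face_3[OF triangle_darts_in(1)] by (simp add: a_y0 u2_def c2_def z2_def)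

text \<open>Here (T3) is needed: with a puncture of valency 1 or 2 these darts can coincide.\<close>

lemma triangle_darts_distinct:
  "x0 \<noteq> y0" "u1 \<noteq> x0" "u1 \<noteq> y0" "u2 \<noteq> x0" "u2 \<noteq> y0" "c1 \<noteq> c2"
  "x0 \<noteq> c1" "x0 \<noteq> c2" "y0 \<noteq> c1" "y0 \<noteq> c2"
  "z1 \<noteq> x0" "z1 \<noteq> y0" "z1 \<noteq> u1" "z1 \<noteq> u2"
  "z2 \<noteq> x0" "z2 \<noteq> y0" "z2 \<noteq> u1" "z2 \<noteq> u2"
proof -
  note inD = triangle_darts_in
  show x0_y0: "x0 \<noteq> y0" using a_neq x0_in y0_def by metis
  show "u1 \<noteq> x0" using face_neq[OF x0_in] by (simp add: u1_def y0_def)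
  show "u1 \<noteq> y0" using s_neq inD by (simp add: u1_def)
  show "u2 \<noteq> x0" using s_neq x0_in by (simp add: u2_def)
  show "u2 \<noteq> y0" using face_neq[OF inD(1)] by (simp add: u2_def a_y0)
  show "c1 \<noteq> c2" using x0_y0 by (simp add: c1_def c2_def a_eq_iff u1_def u2_def s_eq_iff)
  show "x0 \<noteq> c1" using s_neq[OF inD(1)] a_a[OF x0_in] a_a[OF inD(2)] by (metis c1_def u1_def y0_def)
  show "x0 \<noteq> c2" using face_neq[OF inD(1)] a_a[OF x0_in] a_a[OF inD(5)] a_y0 by (metis c2_def u2_def y0_def)
  show "y0 \<noteq> c1" using face_neq[OF x0_in] a_a[OF inD(1)] a_a[OF inD(2)] a_y0 by (metis c1_def u1_def y0_def)
  show "y0 \<noteq> c2" using s_neq[OF x0_in] a_a[OF inD(1)] a_a[OF inD(5)] a_y0 by (metis c2_def u2_def)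
  show z1_x0: "z1 \<noteq> x0" using face_3[OF x0_in] face_neq[OF x0_in] by (auto simp: z1_def c1_def u1_def y0_def)
  show z1_y0: "z1 \<noteq> y0" using s_a_z1 s_neq[OF x0_in] a_y0 by auto
  show "z1 \<noteq> u1" using face_neq[OF inD(2)] by (simp add: z1_def c1_def)
  show "z2 \<noteq> y0"
  proof
    assume "z2 = y0"
    moreover have "s (a u2) = z2" "s (a y0) = u2" by (simp_all add: z2_def c2_def a_y0 u2_def)
    ultimately show False using face_3[OF inD(1)] face_neq[OF inD(1)] by metis
  qed
  show "z2 \<noteq> x0" using s_a_z2 s_neq inD(1) by (metis y0_def)
  show "z2 \<noteq> u2" using face_neq[OF inD(5)] by (simp add: z2_def c2_def)
  show "z1 \<noteq> u2"
  proof
    assume "z1 = u2"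
    then have "x0 = z2" using s_a_z1 by (simp add: z2_def c2_def)
    then have "s (a x0) = y0" using s_a_z2 by simp
    then show False using s_neq[OF inD(1)] by (simp add: y0_def)
  qed
  show "z2 \<noteq> u1"
  proof
    assume "z2 = u1"
    then have "y0 = z1" using s_a_z2 by (simp add: z1_def c1_def)
    then show False using z1_y0 by simp
  qed
qed

text \<open>The new puncture has rotation \<open>p1 q1 p2 q2\<close>; \<open>p1\<close>, \<open>p2\<close> are paired
  with \<open>x0\<close>, \<open>y0\<close> (the two halves of the split arc), and \<open>q1\<close>, \<open>q2\<close> with \<open>r1\<close>, \<open>r2\<close>,
  which are inserted into the rotation right after \<open>c1\<close> and \<open>c2\<close>.\<close>

definition "p1 = Suc (Max D)"
definition "q1 = p1 + 1"
definition "p2 = p1 + 2"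
definition "q2 = p1 + 3"
definition "r1 = p1 + 4"
definition "r2 = p1 + 5"

lemmas fresh_defs = p1_def q1_def p2_def q2_def r1_def r2_def

lemma fresh_neq:
  assumes "x \<in> D"
  shows "x \<noteq> p1" "x \<noteq> q1" "x \<noteq> p2" "x \<noteq> q2" "x \<noteq> r1" "x \<noteq> r2"
proof -
  have "x < p1" using assms finite_D by (simp add: p1_def le_imp_less_Suc)
  then show "x \<noteq> p1" "x \<noteq> q1" "x \<noteq> p2" "x \<noteq> q2" "x \<noteq> r1" "x \<noteq> r2"
    by (simp_all add: fresh_defs)
qed

lemma fresh_notin: "p1 \<notin> D" "q1 \<notin> D" "p2 \<notin> D" "q2 \<notin> D" "r1 \<notin> D" "r2 \<notin> D"
  using fresh_neq by blast+

lemma fresh_distinct: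
  "p1 \<noteq> q1" "p1 \<noteq> p2" "p1 \<noteq> q2" "p1 \<noteq> r1" "p1 \<noteq> r2" "q1 \<noteq> p2" "q1 \<noteq> q2" "q1 \<noteq> r1"
  "q1 \<noteq> r2" "p2 \<noteq> q2" "p2 \<noteq> r1" "p2 \<noteq> r2" "q2 \<noteq> r1" "q2 \<noteq> r2" "r1 \<noteq> r2"
  by (simp_all add: fresh_defs)

definition "s1 = s(c1 := r1, r1 := s c1)"
definition "s2 = s1(c2 := r2, r2 := s1 c2)"
definition "s' x = (if x = p1 then q1 else if x = q1 then p2 else if x = p2 then q2
  else if x = q2 then p1 else s2 x)"
definition "a' x = (if x = x0 then p1 else if x = p1 then x0 else if x = y0 then p2
  else if x = p2 then y0 else if x = q1 then r1 else if x = r1 then q1 else if x = q2 then r2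
  else if x = r2 then q2 else a x)"

definition "D_ext = insert r2 (insert r1 D)"
definition "hub = {p1, q1, p2, q2}"
definition "D' = D_ext \<union> hub"

sublocale insert1: cycle_insert s s1 D c1 r1
  by unfold_locales (simp_all add: s_permutes triangle_darts_in fresh_notin s1_def)

sublocale insert2: cycle_insert s1 s2 "insert r1 D" c2 r2
  by unfold_locales
    (use insert1.g_permutes triangle_darts_in fresh_notin fresh_distinct in \<open>simp_all add: s2_def\<close>)

lemma s'_eq_s: "x \<in> D \<Longrightarrow> x \<noteq> c1 \<Longrightarrow> x \<noteq> c2 \<Longrightarrow> s' x = s x"
  using fresh_neq by (simp add: s'_def s2_def s1_def)

lemma a'_eq_a: "x \<in> D \<Longrightarrow> x \<noteq> x0 \<Longrightarrow> x \<noteq> y0 \<Longrightarrow> a' x = a x"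
  using fresh_neq by (simp add: a'_def)

lemma s'_simps:
  "s' c1 = r1" "s' c2 = r2" "s' r1 = z1" "s' r2 = z2" "s' p1 = q1" "s' q1 = p2" "s' p2 = q2" "s' q2 = p1"
  using triangle_darts_in triangle_darts_distinct fresh_distinct
  by (simp_all add: s'_def s2_def s1_def z1_def z2_def fresh_neq fresh_neq[THEN not_sym])

lemma a'_simps:
  "a' x0 = p1" "a' p1 = x0" "a' y0 = p2" "a' p2 = y0" "a' q1 = r1" "a' r1 = q1" "a' q2 = r2" "a' r2 = q2"
  using x0_in triangle_darts_in triangle_darts_distinct fresh_distinct
  by (simp_all add: a'_def fresh_neq fresh_neq[THEN not_sym])

lemma D_subset_D': "D \<subseteq> D'"
  by (auto simp: D'_def D_ext_def)

lemma fresh_in_D': "p1 \<in> D'" "q1 \<in> D'" "p2 \<in> D'" "q2 \<in> D'" "r1 \<in> D'" "r2 \<in> D'"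
  by (auto simp: D'_def D_ext_def hub_def)

lemma finite_D': "finite D'"
  using finite_D by (simp add: D'_def D_ext_def hub_def)

lemma card_D': "card D' = card D + 6"
  using finite_D fresh_notin fresh_distinct by (simp add: D'_def D_ext_def hub_def)

lemma s2_permutes: "s2 permutes D_ext"
  using insert2.g_permutes by (simp add: D_ext_def)

lemma hub_disjoint: "p1 \<notin> D_ext" "q1 \<notin> D_ext" "p2 \<notin> D_ext" "q2 \<notin> D_ext"
  using fresh_notin fresh_distinct by (auto simp: D_ext_def)

lemma s'_permutes: "s' permutes D'"
proof -
  define cyc where "cyc = Transposition.transpose p1 q2 \<circ> Transposition.transpose p1 p2 \<circ>
     Transposition.transpose p1 q1"
  have s2_hub: "s2 p1 = p1" "s2 q1 = q1" "s2 p2 = p2" "s2 q2 = q2"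
    using hub_disjoint s2_permutes by (simp_all add: permutes_not_in)
  have "s' = s2 \<circ> cyc"
  proof
    fix x
    show "s' x = (s2 \<circ> cyc) x"
      by (cases "x = p1"; cases "x = q1"; cases "x = p2"; cases "x = q2")
        (simp_all add: s'_def cyc_def Transposition.transpose_def fresh_distinct
          fresh_distinct[THEN not_sym] s2_hub)
  qed
  moreover have "cyc permutes D'" unfolding cyc_def
    by (intro permutes_compose permutes_swap_id) (auto simp: D'_def hub_def)
  moreover have "s2 permutes D'"
    by (rule permutes_subset[OF s2_permutes]) (auto simp: D'_def)
  ultimately show ?thesis by (simp add: permutes_compose)
qed

lemma a'_involution: "x \<in> D' \<Longrightarrow> a' x \<in> D' \<and> a' (a' x) = x \<and> a' x \<noteq> x"
proof -
  assume x: "x \<in> D'"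
  show ?thesis
  proof (cases "x \<in> D \<and> x \<noteq> x0 \<and> x \<noteq> y0")
    case True
    then have "a x \<in> D" "a x \<noteq> x0" "a x \<noteq> y0" "a (a x) = x" "a x \<noteq> x"
      using a_in a_a a_neq a_y0 y0_def by metis+
    then show ?thesis using a'_eq_a True D_subset_D' by auto
  next
    case False
    then have "x \<in> {x0, y0, p1, q1, p2, q2, r1, r2}" using x by (auto simp: D'_def D_ext_def hub_def)
    then show ?thesis
      using a'_simps fresh_in_D' x0_in triangle_darts_in D_subset_D' fresh_distinct
        fresh_distinct[THEN not_sym] fresh_neq[OF x0_in] fresh_neq[OF triangle_darts_in(1)]
      by auto
  qed
qed

lemma a'_permutes: "a' permutes D'"
proof (rule involution_permutes)
  fix x assume "x \<notin> D'"
  then have "x \<notin> D" "x \<noteq> x0" "x \<noteq> y0" using D_subset_D' x0_in triangle_darts_in by auto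
  then show "a' x = x" using \<open>x \<notin> D'\<close> fresh_in_D' a_permutes by (auto simp: a'_def permutes_not_in)
qed (use a'_involution in blast)

definition "triangles = {x0, u1, z1, y0, u2, z2}"

lemma s'_a'_outside_triangles: "x \<in> D \<Longrightarrow> x \<notin> triangles \<Longrightarrow> s' (a' x) = s (a x)"
  using a'_eq_a s'_eq_s a_in
  by (auto simp: triangles_def c1_def c2_def a_eq_iff)

lemma s_a_outside_triangles: "x \<in> D \<Longrightarrow> x \<notin> triangles \<Longrightarrow> s (a x) \<notin> triangles"
proof
  assume x: "x \<in> D" "x \<notin> triangles" and "s (a x) \<in> triangles"
  have face_x: "s (a (s (a (s (a x))))) = x" using face_3 x by simp
  have steps: "s (a x0) = u1" "s (a u1) = z1" "s (a y0) = u2" "s (a u2) = z2"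
    by (simp_all add: u1_def z1_def c1_def a_y0 u2_def z2_def c2_def) (simp add: y0_def)
  from \<open>s (a x) \<in> triangles\<close> consider "s (a x) = x0" | "s (a x) = y0"
    | "s (a x) \<in> {u1, z1, u2, z2}" by (auto simp: triangles_def)
  then show False
  proof cases
    case 1
    then have "x = z1" using face_x steps by simp
    then show ?thesis using x by (simp add: triangles_def)
  next
    case 2
    then have "x = z2" using face_x steps by simp
    then show ?thesis using x by (simp add: triangles_def)
  next
    case 3
    then have "s (a x) \<in> {s (a x0), s (a u1), s (a y0), s (a u2)}" by (simp only: steps)
    then have "x \<in> {x0, u1, y0, u2}" by (auto simp: s_eq_iff a_eq_iff)
    then show ?thesis using x by (auto simp: triangles_def)
  qed
qed

lemma face_3_new:
  assumes "x \<in> D'"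
  shows "s' (a' (s' (a' (s' (a' x))))) = x \<and> s' (a' x) \<noteq> x"
proof (cases "x \<in> D \<and> x \<notin> triangles")
  case True
  then show ?thesis
    using s'_a'_outside_triangles s_a_outside_triangles face_3 face_neq s_in a_in by simp
next
  case False
  then have x: "x \<in> triangles \<union> {p1, q1, p2, q2, r1, r2}"
    using assms by (auto simp: D'_def D_ext_def hub_def)
  have tri_a': "a' z1 = a z1" "a' z2 = a z2" "a' u1 = c1" "a' u2 = c2"
    using a'_eq_a triangle_darts_in triangle_darts_distinct by (auto simp: c1_def c2_def)
  have tri_s': "s' (a z1) = x0" "s' (a z2) = y0" "s' y0 = u1" "s' x0 = u2"
  proof -
    have "a z1 \<noteq> c1" "a z1 \<noteq> c2" "a z2 \<noteq> c1" "a z2 \<noteq> c2"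
      using triangle_darts_distinct by (auto simp: c1_def c2_def a_eq_iff)
    then show "s' (a z1) = x0" "s' (a z2) = y0"
      using s'_eq_s triangle_darts_in s_a_z1 s_a_z2 by auto
    show "s' y0 = u1" "s' x0 = u2"
      using s'_eq_s triangle_darts_in x0_in triangle_darts_distinct by (auto simp: u1_def u2_def)
  qed
  note ne = fresh_neq[OF x0_in] fresh_neq[OF triangle_darts_in(1)] fresh_neq[OF triangle_darts_in(2)]
    fresh_neq[OF triangle_darts_in(4)] fresh_neq[OF triangle_darts_in(5)]
    fresh_neq[OF triangle_darts_in(7)]
  define Q where "Q v \<longleftrightarrow> s' (a' (s' (a' (s' (a' v))))) = v \<and> s' (a' v) \<noteq> v" for v
  have "Q x0" "Q u1" "Q z1" "Q y0" "Q u2" "Q z2" "Q p1" "Q q1" "Q p2" "Q q2" "Q r1" "Q r2"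
    unfolding Q_def
    by (simp_all only: s'_simps a'_simps tri_a' tri_s')
      (simp_all add: ne ne[THEN not_sym] fresh_distinct fresh_distinct[THEN not_sym]
        triangle_darts_distinct triangle_darts_distinct[THEN not_sym])
  then show ?thesis using x unfolding Q_def triangles_def by auto
qed

definition "moves' = {(z, s' z) | z. z \<in> D'} \<union> {(z, a' z) | z. z \<in> D'}"

lemma move_s': "z \<in> D' \<Longrightarrow> (z, s' z) \<in> moves'\<^sup>*"
  and move_a': "z \<in> D' \<Longrightarrow> (z, a' z) \<in> moves'\<^sup>*"
  by (auto simp: moves'_def)

lemma x0_y0_reachable: "(x0, y0) \<in> moves'\<^sup>*" "(y0, x0) \<in> moves'\<^sup>*"
proof -
  have in_D': "x0 \<in> D'" "y0 \<in> D'" using x0_in triangle_darts_in D_subset_D' by auto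
  have "(x0, p1) \<in> moves'\<^sup>*" using move_a'[OF in_D'(1)] a'_simps by simp
  also have "(p1, q1) \<in> moves'\<^sup>*" using move_s'[OF fresh_in_D'(1)] s'_simps by simp
  also have "(q1, p2) \<in> moves'\<^sup>*" using move_s'[OF fresh_in_D'(2)] s'_simps by simp
  also have "(p2, y0) \<in> moves'\<^sup>*" using move_a'[OF fresh_in_D'(3)] a'_simps by simp
  finally show "(x0, y0) \<in> moves'\<^sup>*" .
  have "(y0, p2) \<in> moves'\<^sup>*" using move_a'[OF in_D'(2)] a'_simps by simp
  also have "(p2, q2) \<in> moves'\<^sup>*" using move_s'[OF fresh_in_D'(3)] s'_simps by simp
  also have "(q2, p1) \<in> moves'\<^sup>*" using move_s'[OF fresh_in_D'(4)] s'_simps by simp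
  also have "(p1, x0) \<in> moves'\<^sup>*" using move_a'[OF fresh_in_D'(1)] a'_simps by simp
  finally show "(y0, x0) \<in> moves'\<^sup>*" .
qed

text \<open>Every rotation or pairing step of the old map is simulated in the new one: the arc
  \<open>x0\<close>--\<open>y0\<close> by a detour through the new puncture, \<open>c1 \<mapsto> s c1\<close> via \<open>r1\<close>, \<open>c2 \<mapsto> s c2\<close> via \<open>r2\<close>.\<close>

lemma old_move_reachable:
  assumes "u \<in> D" "v = s u \<or> v = a u"
  shows "(u, v) \<in> moves'\<^sup>*"
proof -
  have c12: "(c1, s c1) \<in> moves'\<^sup>*" "(c2, s c2) \<in> moves'\<^sup>*"
  proof -
    have "(c1, r1) \<in> moves'\<^sup>*" using move_s'[of c1] s'_simps triangle_darts_in D_subset_D' by auto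
    also have "(r1, s c1) \<in> moves'\<^sup>*" using move_s'[OF fresh_in_D'(5)] s'_simps z1_def by simp
    finally show "(c1, s c1) \<in> moves'\<^sup>*" .
    have "(c2, r2) \<in> moves'\<^sup>*" using move_s'[of c2] s'_simps triangle_darts_in D_subset_D' by auto
    also have "(r2, s c2) \<in> moves'\<^sup>*" using move_s'[OF fresh_in_D'(6)] s'_simps z2_def by simp
    finally show "(c2, s c2) \<in> moves'\<^sup>*" .
  qed
  from assms(2) show ?thesis
  proof
    assume "v = s u"
    then show ?thesis
      using c12 move_s'[of u] s'_eq_s[of u] assms(1) D_subset_D' by (cases "u = c1 \<or> u = c2") auto
  next
    assume "v = a u"
    then show ?thesis
      using x0_y0_reachable move_a'[of u] a'_eq_a[of u] assms(1) D_subset_D' a_y0 y0_def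
      by (cases "u = x0 \<or> u = y0") auto
  qed
qed

lemma D_reachable:
  assumes "u \<in> D" "v \<in> D"
  shows "(u, v) \<in> moves'\<^sup>*"
  using connected[OF assms]
proof (induction rule: rtrancl_induct)
  case (step y z)
  then have "(y, z) \<in> moves'\<^sup>*" using old_move_reachable by blast
  with step.IH show ?case by (rule rtrancl_trans)
qed simp

lemma fresh_reachable:
  assumes "x \<in> {p1, q1, p2, q2, r1, r2}"
  shows "(x0, x) \<in> moves'\<^sup>*" "(x, x0) \<in> moves'\<^sup>*"
proof -
  have x0_p1: "(x0, p1) \<in> moves'\<^sup>*" "(p1, x0) \<in> moves'\<^sup>*"
    using move_a'[of x0] move_a'[OF fresh_in_D'(1)] a'_simps x0_in D_subset_D' by auto
  have "(x0, q1) \<in> moves'\<^sup>*"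
    using x0_p1 move_s'[OF fresh_in_D'(1)] s'_simps by (metis rtrancl_trans)
  moreover have "(x0, p2) \<in> moves'\<^sup>*"
    using calculation move_s'[OF fresh_in_D'(2)] s'_simps by (metis rtrancl_trans)
  moreover have "(x0, q2) \<in> moves'\<^sup>*"
    using calculation move_s'[OF fresh_in_D'(3)] s'_simps by (metis rtrancl_trans)
  moreover have "(x0, r1) \<in> moves'\<^sup>*"
    using calculation move_a'[OF fresh_in_D'(2)] a'_simps by (metis rtrancl_trans)
  moreover have "(x0, r2) \<in> moves'\<^sup>*"
    using calculation move_a'[OF fresh_in_D'(4)] a'_simps by (metis rtrancl_trans)
  ultimately show "(x0, x) \<in> moves'\<^sup>*" using assms x0_p1 by auto
  have "(p2, x0) \<in> moves'\<^sup>*"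
    using x0_y0_reachable move_a'[OF fresh_in_D'(3)] a'_simps by (metis rtrancl_trans)
  moreover have "(q2, x0) \<in> moves'\<^sup>*"
    using x0_p1 move_s'[OF fresh_in_D'(4)] s'_simps by (metis rtrancl_trans)
  moreover have "(q1, x0) \<in> moves'\<^sup>*"
    using calculation move_s'[OF fresh_in_D'(2)] s'_simps by (metis rtrancl_trans)
  moreover have "(r1, x0) \<in> moves'\<^sup>*"
    using calculation move_a'[OF fresh_in_D'(5)] a'_simps by (metis rtrancl_trans)
  moreover have "(r2, x0) \<in> moves'\<^sup>*"
    using calculation move_a'[OF fresh_in_D'(6)] a'_simps by (metis rtrancl_trans)
  ultimately show "(x, x0) \<in> moves'\<^sup>*" using assms x0_p1 by auto
qed

lemma D'_connected:
  assumes "x \<in> D'" "y \<in> D'"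
  shows "(x, y) \<in> moves'\<^sup>*"
proof -
  have "(x, x0) \<in> moves'\<^sup>*" "(x0, y) \<in> moves'\<^sup>*"
    using assms fresh_reachable D_reachable x0_in by (auto simp: D'_def D_ext_def hub_def)
  then show ?thesis by (rule rtrancl_trans)
qed

lemma tri_map_new: "tri_map D' s' a'"
  unfolding tri_map_def
proof (intro conjI)
  show "finite D'" by (rule finite_D')
  show "D' \<noteq> {}" using fresh_in_D' by auto
  show "s' permutes D'" by (rule s'_permutes)
  show "a' permutes D'" by (rule a'_permutes)
  show "\<forall>x\<in>D'. a' x \<noteq> x \<and> a' (a' x) = x" using a'_involution by blast
  show "\<forall>x\<in>D'. ((s' \<circ> a') ^^ 3) x = x \<and> (s' \<circ> a') x \<noteq> x"
    using face_3_new by (simp add: numeral_3_eq_3)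
  show "\<forall>x\<in>D'. \<forall>y\<in>D'. (x, y) \<in> ({(z, s' z) |z. z \<in> D'} \<union> {(z, a' z) |z. z \<in> D'})\<^sup>*"
    using D'_connected unfolding moves'_def by blast
qed

lemma dorbit_s'_D_ext: "x \<in> D_ext \<Longrightarrow> dorbit s' x = dorbit s2 x"
proof (rule dorbit_cong)
  fix u assume "x \<in> D_ext" "u \<in> dorbit s2 x"
  then have "u \<in> D_ext" using dorbit_subset_permutes[OF s2_permutes] by blast
  then show "s' u = s2 u" using hub_disjoint by (auto simp: s'_def)
qed

lemma dorbit_s'_hub:
  assumes "x \<in> hub"
  shows "dorbit s' x = hub"
proof
  show "dorbit s' x \<subseteq> hub"
    by (rule dorbit_least) (use assms in \<open>auto simp: hub_def s'_simps\<close>)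
  have "s' (s' (s' x)) \<in> dorbit s' x" "s' (s' x) \<in> dorbit s' x" "s' x \<in> dorbit s' x" "x \<in> dorbit s' x"
    by (intro dorbit_closed self_in_dorbit)+
  then show "hub \<subseteq> dorbit s' x"
    using assms by (auto simp: hub_def s'_simps)
qed

lemma valency_hub: "x \<in> hub \<Longrightarrow> valency s' x = 4"
  using dorbit_s'_hub fresh_distinct by (simp add: valency_def hub_def)

lemma card_punctures_new: "card (punctures D' s') = Suc (card (punctures D s))"
proof -
  have "punctures D' s' = dorbit s' ` D_ext \<union> dorbit s' ` hub"
    by (simp add: punctures_def D'_def image_Un)
  also have "dorbit s' ` D_ext = dorbit s2 ` D_ext" using dorbit_s'_D_ext by simp
  also have "dorbit s' ` hub = {hub}" using dorbit_s'_hub by (auto simp: hub_def)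
  finally have "punctures D' s' = insert hub (dorbit s2 ` D_ext)" by simp
  moreover have "hub \<notin> dorbit s2 ` D_ext"
    using dorbit_subset_permutes[OF s2_permutes] hub_disjoint by (fastforce simp: hub_def)
  moreover have "card (dorbit s2 ` D_ext) = card (dorbit s ` D)"
    using insert2.card_dorbit_image insert1.card_dorbit_image finite_D by (simp add: D_ext_def)
  ultimately show ?thesis using finite_D by (simp add: punctures_def D_ext_def)
qed

lemma euler_char_new: "euler_char D' s' = euler_char D s"
proof -
  have "(card D + 6) div 3 = card D div 3 + 2" "(card D + 6) div 2 = card D div 2 + 3"
    by presburger+
  then show ?thesis using card_punctures_new card_D' unfolding euler_char_def by simp
qed

lemma valency_mono: "x \<in> D \<Longrightarrow> valency s x \<le> valency s' x"
proof -
  assume x: "x \<in> D"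
  then have "dorbit s x \<subseteq> dorbit s' x"
    using insert1.dorbit_subset insert2.dorbit_subset dorbit_s'_D_ext by (auto simp: D_ext_def)
  then show ?thesis
    unfolding valency_def using finite_dorbit[OF s'_permutes finite_D'] x D_subset_D'
    by (intro card_mono) auto
qed

lemma valency_fresh: "x \<in> D' - D \<Longrightarrow> 4 \<le> valency s' x"
proof -
  have T3': "3 \<le> card (dorbit s x)" if "x \<in> D" for x
    using T3 that by (simp add: T3_def valency_def)
  have fin: "finite (dorbit s' x)" if "x \<in> D'" for x
    using finite_dorbit[OF s'_permutes finite_D' that] .
  have "s1 c2 = s c2"
    using triangle_darts_distinct fresh_neq[OF triangle_darts_in(6)] by (simp add: s1_def)
  moreover have "finite (dorbit s1 (s c2))"
    using finite_dorbit[OF insert1.g_permutes] finite_D s_in triangle_darts_in by simp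
  ultimately have "card (dorbit s (s c2)) \<le> card (dorbit s1 (s1 c2))"
    using insert1.dorbit_subset by (simp add: card_mono)
  then have "3 \<le> card (dorbit s1 (s1 c2))"
    using T3'[OF s_in[OF triangle_darts_in(6)]] by linarith
  then have r2: "4 \<le> card (dorbit s' r2)"
    using insert2.card_dorbit_new finite_D dorbit_s'_D_ext by (simp add: D_ext_def)
  have "4 \<le> card (dorbit s1 r1)"
    using insert1.card_dorbit_new finite_D T3'[OF s_in[OF triangle_darts_in(3)]] by simp
  also have "card (dorbit s1 r1) \<le> card (dorbit s' r1)"
    using insert2.dorbit_subset dorbit_s'_D_ext fin[OF fresh_in_D'(5)]
    by (intro card_mono) (auto simp: D_ext_def)
  finally have r1: "4 \<le> card (dorbit s' r1)" .
  assume "x \<in> D' - D"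
  then have "x \<in> hub \<or> x = r1 \<or> x = r2" by (auto simp: D'_def D_ext_def)
  then show ?thesis using r1 r2 valency_hub by (auto simp: valency_def)
qed

lemma a'_cases: "x \<in> D \<Longrightarrow> a' x = a x \<or> a' x \<in> hub"
  using a'_eq_a a'_simps by (auto simp: hub_def)

end

section \<open>Preservation of (T3), (T3\<onehalf>) and (T4)\<close>

lemma add_puncture:
  assumes tri: "is_triangulation_of g n D s a" and T3: "T3 D s a"
  obtains D' s' a' where "is_triangulation_of g (Suc n) D' s' a'" "D \<subseteq> D'"
    "\<forall>x\<in>D. valency s x \<le> valency s' x" "\<forall>x\<in>D'-D. 4 \<le> valency s' x"
    "\<forall>x\<in>D. a' x = a x \<or> 4 \<le> valency s' (a' x)"
proof -
  have "tri_map D s a" using tri by (simp add: is_triangulation_of_def)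
  then obtain x0 where "x0 \<in> D" unfolding tri_map_def by blast
  interpret puncture_on_arc D s a x0
    by unfold_locales (use \<open>tri_map D s a\<close> T3 \<open>x0 \<in> D\<close> in auto)
  show ?thesis
  proof (rule that[of D' s' a'])
    show "is_triangulation_of g (Suc n) D' s' a'"
      using tri tri_map_new card_punctures_new euler_char_new by (simp add: is_triangulation_of_def)
    show "\<forall>x\<in>D. a' x = a x \<or> 4 \<le> valency s' (a' x)"
      using a'_cases valency_hub by fastforce
  qed (use D_subset_D' valency_mono valency_fresh in auto)
qed

lemma add_puncture_T3:
  assumes tri: "is_triangulation_of g n D s a" and T3: "T3 D s a"
  obtains D' s' a' where "is_triangulation_of g (Suc n) D' s' a'" "T3 D' s' a'"
    "\<forall>x\<in>D. valency s x \<le> valency s' x" "\<forall>x\<in>D'-D. 4 \<le> valency s' x"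
    "\<forall>x\<in>D. a' x = a x \<or> 4 \<le> valency s' (a' x)"
proof -
  obtain D' s' a' where tri': "is_triangulation_of g (Suc n) D' s' a'" "D \<subseteq> D'"
    and mono: "\<forall>x\<in>D. valency s x \<le> valency s' x" and fresh: "\<forall>x\<in>D'-D. 4 \<le> valency s' x"
    and arcs: "\<forall>x\<in>D. a' x = a x \<or> 4 \<le> valency s' (a' x)"
    by (rule add_puncture[OF tri T3])
  have "3 \<le> valency s' x" if x: "x \<in> D'" for x
  proof (cases "x \<in> D")
    case True
    then show ?thesis using T3 mono unfolding T3_def by (meson le_trans)
  next
    case False
    with fresh x have "4 \<le> valency s' x" by blast
    then show ?thesis by simp
  qed
  then have "T3 D' s' a'" by (simp add: T3_def)
  then show ?thesis using that tri' mono fresh arcs by blast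
qed

lemma T3_add_puncture:
  assumes "has_triangulation g n T3"
  shows "has_triangulation g (Suc n) T3"
proof -
  obtain D s a where "is_triangulation_of g n D s a" "T3 D s a"
    using assms unfolding has_triangulation_def by blast
  then obtain D' s' a' where "is_triangulation_of g (Suc n) D' s' a'" "T3 D' s' a'"
    by (rule add_puncture_T3)
  then show ?thesis unfolding has_triangulation_def by blast
qed

lemma T4_add_puncture:
  assumes "has_triangulation g n T4"
  shows "has_triangulation g (Suc n) T4"
proof -
  obtain D s a where tri: "is_triangulation_of g n D s a" and T4: "T4 D s a"
    using assms unfolding has_triangulation_def by blast
  then have "T3 D s a" unfolding T3_def T4_def by force
  then obtain D' s' a' where tri': "is_triangulation_of g (Suc n) D' s' a'"
    and mono: "\<forall>x\<in>D. valency s x \<le> valency s' x" and fresh: "\<forall>x\<in>D'-D. 4 \<le> valency s' x"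
    by (rule add_puncture_T3[OF tri])
  have "4 \<le> valency s' x" if x: "x \<in> D'" for x
  proof (cases "x \<in> D")
    case True
    then show ?thesis using T4 mono unfolding T4_def by (meson le_trans)
  qed (use fresh x in auto)
  then have "T4 D' s' a'" by (simp add: T4_def)
  with tri' show ?thesis unfolding has_triangulation_def by blast
qed

lemma T3half_add_puncture:
  assumes "has_triangulation g n T3half"
  shows "has_triangulation g (Suc n) T3half"
proof -
  obtain D s a where tri: "is_triangulation_of g n D s a" and T3half: "T3half D s a"
    using assms unfolding has_triangulation_def by blast
  then have T3: "T3 D s a" by (simp add: T3half_def)
  have a_in: "a x \<in> D" if "x \<in> D" for x
    using tri that by (simp add: is_triangulation_of_def tri_map_def permutes_in_image)
  obtain D' s' a' where tri': "is_triangulation_of g (Suc n) D' s' a'" and T3': "T3 D' s' a'"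
    and mono: "\<forall>x\<in>D. valency s x \<le> valency s' x" and fresh: "\<forall>x\<in>D'-D. 4 \<le> valency s' x"
    and arcs: "\<forall>x\<in>D. a' x = a x \<or> 4 \<le> valency s' (a' x)"
    by (rule add_puncture_T3[OF tri T3])
  have "4 \<le> valency s' x \<or> 4 \<le> valency s' (a' x)" if x: "x \<in> D'" for x
  proof (cases "x \<in> D")
    case True
    have "4 \<le> valency s x \<or> 4 \<le> valency s (a x)" using T3half True by (simp add: T3half_def)
    moreover have "valency s x \<le> valency s' x" "valency s (a x) \<le> valency s' (a x)"
      using mono a_in True by auto
    moreover have "a' x = a x \<or> 4 \<le> valency s' (a' x)" using arcs True by blast
    ultimately show ?thesis by auto
  qed (use fresh x in auto)
  with T3' have "T3half D' s' a'" by (simp add: T3half_def)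
  with tri' show ?thesis unfolding has_triangulation_def by blast
qed

theorem lemma5p2:
  fixes g n :: nat
  assumes "n \<ge> 1"
  shows "(has_triangulation g n T3 \<longrightarrow> has_triangulation g (Suc n) T3) \<and>
         (has_triangulation g n T3half \<longrightarrow> has_triangulation g (Suc n) T3half) \<and>
         (has_triangulation g n T4 \<longrightarrow> has_triangulation g (Suc n) T4)"
  using T3_add_puncture T3half_add_puncture T4_add_puncture by blast

end
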